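(* The allocation rule of the Uniform Price Auction is monotone: for every agent $i$, every profile of the other agents' values $v_{-i}$, and fixed budgets, the map $v_i\mapsto x_i(v_i,v_{-i})$ is non-decreasing.
   Context: Uniform Price Auction: one unit of a divisible good, $n$ agents with values per unit $v_i>0$ and publicly known budgets $B_i>0$. Relabel agents so that $v_1\ge\dots\ge v_n$ and set $v_{n+1}=0$. Let $k\in\{0,\dots,n\}$ be the largest integer with $\sum_{j=1}^kB_j\le v_k$ (the empty sum is $0$, and $k=0$ is always admissible). Case I: if $\sum_{j=1}^kB_j>v_{k+1}$, allocate $x_i=B_i/\sum_{j=1}^kB_j$ for $i\le k$ and $0$ to everyone else. Case II: if $\sum_{j=1}^kB_j\le v_{k+1}$, allocate $x_i=B_i/v_{k+1}$ for $i\le k$, $x_{k+1}=1-\sum_{j=1}^kx_j$, and $0$ to everyone else. Payments are given by Myerson's formula $\pi_i(v)=v_ix_i(v)-\int_0^{v_i}x_i(u,v_{-i})\,du$. *)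

theory Defs
  imports Complex_Main
begin

text \<open>Agents are 0, ..., n-1; v j is the value per unit, B j the budget of agent j.
  Ranks are 1, ..., n, matching the paper's relabelling v_1 >= ... >= v_n.\<close>

definition upa_rank :: "nat \<Rightarrow> (nat \<Rightarrow> real) \<Rightarrow> nat \<Rightarrow> nat" where
  "upa_rank n v i = card {j. j < n \<and> (v j > v i \<or> (v j = v i \<and> j < i))} + 1"

definition upa_agent :: "nat \<Rightarrow> (nat \<Rightarrow> real) \<Rightarrow> nat \<Rightarrow> nat" where
  "upa_agent n v p = (THE i. i < n \<and> upa_rank n v i = p)"

definition upa_sval :: "nat \<Rightarrow> (nat \<Rightarrow> real) \<Rightarrow> nat \<Rightarrow> real" where
  "upa_sval n v p = (if 1 \<le> p \<and> p \<le> n then v (upa_agent n v p) else 0)"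

definition upa_cumB :: "nat \<Rightarrow> (nat \<Rightarrow> real) \<Rightarrow> (nat \<Rightarrow> real) \<Rightarrow> nat \<Rightarrow> real" where
  "upa_cumB n v B k = (\<Sum>j\<in>{j. j < n \<and> upa_rank n v j \<le> k}. B j)"

definition upa_k :: "nat \<Rightarrow> (nat \<Rightarrow> real) \<Rightarrow> (nat \<Rightarrow> real) \<Rightarrow> nat" where
  "upa_k n v B = Max {k. k \<le> n \<and> (k = 0 \<or> upa_cumB n v B k \<le> upa_sval n v k)}"

definition upa_alloc :: "nat \<Rightarrow> (nat \<Rightarrow> real) \<Rightarrow> (nat \<Rightarrow> real) \<Rightarrow> nat \<Rightarrow> real" where
  "upa_alloc n v B i =
    (let k = upa_k n v B; S = upa_cumB n v B k; r = upa_rank n v i; w = upa_sval n v (k + 1) in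
     if n \<le> i then 0
     else if S > w then (if r \<le> k then B i / S else 0)
     else (if r \<le> k then B i / w
           else if r = k + 1 then 1 - (\<Sum>j\<in>{j. j < n \<and> upa_rank n v j \<le> k}. B j / w)
           else 0))"

end

theory Submission
  imports Defs
begin

text \<open>Fix a profile and let K be the winning set (the agents of rank at most k). A winner pays the
  uniform price p = max(B(K), v_{k+1}) per unit and receives B_i/p; a loser receives
  max(0, 1 - S_i/v_i), where S_i is the budget of the agents ranked above it. Raising v_i to v_i'
  only shrinks S_i, so a winner stays a winner and a loser's share grows. The price is bounded by
  any t admitting a set M with B(M) \<le> t whose complement values the good at most t. For a winner,
  M = K and t = p show that the price does not rise when v_i does; for a loser, M = {i} \<union> (agents
  above i) and t = S_i + B_i show that a loser turned winner gets at least B_i/(S_i + B_i), which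
  exceeds its share as a loser.\<close>

locale upa_profile =
  fixes n :: nat and v B :: "nat \<Rightarrow> real"
  assumes values_pos: "\<forall>j<n. 0 < v j" and budgets_pos: "\<forall>j<n. 0 < B j"
begin

abbreviation beats :: "nat \<Rightarrow> nat \<Rightarrow> bool" where
  "beats j l \<equiv> v l < v j \<or> (v j = v l \<and> j < l)"
abbreviation rank :: "nat \<Rightarrow> nat" where "rank \<equiv> upa_rank n v"
abbreviation ahead :: "nat \<Rightarrow> nat set" where "ahead j \<equiv> {l. l < n \<and> beats l j}"
abbreviation ranked_upto :: "nat \<Rightarrow> nat set" where "ranked_upto k \<equiv> {j. j < n \<and> rank j \<le> k}"
abbreviation sval :: "nat \<Rightarrow> real" where "sval \<equiv> upa_sval n v"
abbreviation cumB :: "nat \<Rightarrow> real" where "cumB \<equiv> upa_cumB n v B"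
abbreviation admissible :: "nat \<Rightarrow> bool" where "admissible k \<equiv> k = 0 \<or> cumB k \<le> sval k"
abbreviation cutoff :: nat where "cutoff \<equiv> upa_k n v B"
abbreviation winners :: "nat set" where "winners \<equiv> ranked_upto cutoff"
abbreviation price :: real where "price \<equiv> max (cumB cutoff) (sval (cutoff + 1))"

subsection \<open>Ranks and sorted values\<close>

lemma rank_eq_card_ahead: "rank j = card (ahead j) + 1"
  by (simp add: upa_rank_def)

lemma rank_less: assumes "j < n" "beats j l" shows "rank j < rank l"
proof -
  have "ahead j \<subset> ahead l" using assms by auto
  then have "card (ahead j) < card (ahead l)" by (intro psubset_card_mono) auto
  then show ?thesis by (simp add: rank_eq_card_ahead)
qed

lemma rank_less_iff: assumes "j < n" "l < n" shows "rank j < rank l \<longleftrightarrow> beats j l"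
proof
  assume less: "rank j < rank l"
  show "beats j l"
  proof (rule ccontr)
    assume "\<not> beats j l"
    then have "j = l \<or> beats l j" by auto
    then show False using less rank_less[OF assms(2), of j] by auto
  qed
qed (use rank_less assms in auto)

lemma rank_inject: assumes "j < n" "l < n" "rank j = rank l" shows "j = l"
proof (rule ccontr)
  assume "j \<noteq> l"
  then have "beats j l \<or> beats l j" by auto
  then show False using rank_less assms by fastforce
qed

lemma rank_bounds: assumes "j < n" shows "1 \<le> rank j" "rank j \<le> n"
proof -
  have "card (ahead j) \<le> card ({..<n} - {j})" by (intro card_mono) auto
  also have "\<dots> = n - 1" using assms by simp
  finally show "1 \<le> rank j" "rank j \<le> n" using assms by (simp_all add: rank_eq_card_ahead)
qed

lemma rank_image: "rank ` {..<n} = {1..n}"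
proof -
  have "inj_on rank {..<n}" using rank_inject by (auto simp: inj_on_def)
  then have "card (rank ` {..<n}) = card {1..n}" by (simp add: card_image)
  moreover have "rank ` {..<n} \<subseteq> {1..n}" using rank_bounds by auto
  ultimately show ?thesis by (intro card_subset_eq) auto
qed

lemma agent_of_rank: assumes "1 \<le> p" "p \<le> n"
  shows "upa_agent n v p < n" "rank (upa_agent n v p) = p"
proof -
  have "\<exists>!j. j < n \<and> rank j = p"
    using assms rank_image rank_inject by (metis atLeastAtMost_iff imageE lessThan_iff)
  then have "upa_agent n v p < n \<and> rank (upa_agent n v p) = p"
    unfolding upa_agent_def by (rule theI')
  then show "upa_agent n v p < n" "rank (upa_agent n v p) = p" by auto
qed

lemma sval_rank: assumes "j < n" shows "sval (rank j) = v j"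
proof -
  have "upa_agent n v (rank j) = j"
    using agent_of_rank rank_bounds[OF assms] rank_inject[OF _ assms] by auto
  then show ?thesis using rank_bounds[OF assms] by (simp add: upa_sval_def)
qed

lemma sval_le_value: assumes "j < n" "rank j \<le> p" "p \<le> n" shows "sval p \<le> v j"
proof -
  define g where "g = upa_agent n v p"
  have g: "g < n" "rank g = p" using agent_of_rank rank_bounds[OF assms(1)] assms g_def by auto
  then have "j = g \<or> beats j g"
    using rank_less_iff[OF assms(1) g(1)] rank_inject[OF assms(1) g(1)] assms(2) by linarith
  then show ?thesis using g sval_rank by auto
qed

lemma value_le_sval: assumes "j < n" "1 \<le> p" "p \<le> rank j" shows "v j \<le> sval p"
proof -
  define g where "g = upa_agent n v p"
  have g: "g < n" "rank g = p"
    using agent_of_rank rank_bounds[OF assms(1)] assms g_def by (meson le_trans)+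
  then have "j = g \<or> beats g j"
    using rank_less_iff[OF g(1) assms(1)] rank_inject[OF assms(1) g(1)] assms(3) by linarith
  then show ?thesis using g sval_rank by auto
qed

subsection \<open>Cumulative budgets\<close>

lemma sum_budgets_mono: assumes "X \<subseteq> Y" "Y \<subseteq> {..<n}" shows "sum B X \<le> sum B Y"
  using assms budgets_pos finite_subset[OF assms(2)] by (intro sum_mono2) (auto intro: less_imp_le)

lemma sum_budgets_nonneg: assumes "X \<subseteq> {..<n}" shows "0 \<le> sum B X"
  using sum_budgets_mono[OF empty_subsetI assms] by simp

lemma cumB_eq: "cumB k = sum B (ranked_upto k)"
  by (simp add: upa_cumB_def)

lemma cumB_mono: "k \<le> k' \<Longrightarrow> cumB k \<le> cumB k'"
  unfolding cumB_eq by (rule sum_budgets_mono) auto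

lemma ranked_upto_rank: assumes "j < n"
  shows "ranked_upto (rank j - 1) = ahead j" "ranked_upto (rank j) = insert j (ahead j)"
proof -
  have "l < n \<Longrightarrow> rank l \<le> rank j - 1 \<longleftrightarrow> beats l j" for l
    using rank_less_iff[OF _ assms, of l] rank_bounds(1)[OF assms] by linarith
  then show "ranked_upto (rank j - 1) = ahead j" by auto
  have "l < n \<Longrightarrow> rank l \<le> rank j \<longleftrightarrow> beats l j \<or> l = j" for l
    using rank_less_iff[OF _ assms, of l] rank_inject[OF _ assms, of l] by (auto simp: le_less)
  then show "ranked_upto (rank j) = insert j (ahead j)" using assms by auto
qed

lemma cumB_rank: assumes "j < n"
  shows "cumB (rank j - 1) = sum B (ahead j)" "cumB (rank j) = sum B (ahead j) + B j"
  using ranked_upto_rank[OF assms] by (simp_all add: cumB_eq add.commute)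

subsection \<open>The cutoff and the winners\<close>

lemma cutoff_greatest: "cutoff \<le> n" "admissible cutoff" "k \<le> n \<Longrightarrow> admissible k \<Longrightarrow> k \<le> cutoff"
proof -
  let ?S = "{k. k \<le> n \<and> admissible k}"
  have fin: "finite ?S" by (rule finite_subset[of _ "{..n}"]) auto
  have "cutoff \<in> ?S" unfolding upa_k_def by (rule Max_in[OF fin]) auto
  then show "cutoff \<le> n" "admissible cutoff" by auto
  show "k \<le> n \<Longrightarrow> admissible k \<Longrightarrow> k \<le> cutoff" unfolding upa_k_def using Max_ge[OF fin] by auto
qed

lemma admissible_downward: assumes "admissible k" "k \<le> n" "k' \<le> k" shows "admissible k'"
proof (cases "k' = 0")
  case False
  then have "1 \<le> k'" "k \<noteq> 0" using assms by auto
  then obtain g where g: "g < n" "rank g = k" using agent_of_rank assms by (metis le_trans)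
  have "sval k \<le> sval k'" using sval_rank[OF g(1)] value_le_sval[OF g(1) \<open>1 \<le> k'\<close>] g assms by auto
  then show ?thesis using cumB_mono[OF assms(3)] assms \<open>k \<noteq> 0\<close> by auto
qed simp

lemma winner_iff: assumes "i < n" shows "rank i \<le> cutoff \<longleftrightarrow> sum B (ahead i) + B i \<le> v i"
proof
  assume "rank i \<le> cutoff"
  then have "admissible (rank i)" using admissible_downward cutoff_greatest by blast
  then show "sum B (ahead i) + B i \<le> v i"
    using rank_bounds[OF assms] sval_rank[OF assms] cumB_rank[OF assms] by auto
next
  assume "sum B (ahead i) + B i \<le> v i"
  then show "rank i \<le> cutoff"
    using cutoff_greatest(3) rank_bounds[OF assms] sval_rank[OF assms] cumB_rank[OF assms] by auto
qed

lemma winner_bounds_price: assumes "l \<in> winners" shows "cumB cutoff \<le> v l" "sval (cutoff + 1) \<le> v l"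
proof -
  have l: "l < n" "rank l \<le> cutoff" using assms by auto
  then have "cutoff \<noteq> 0" using rank_bounds[OF l(1)] by auto
  then have "cumB cutoff \<le> sval cutoff" using cutoff_greatest(2) by auto
  also have "\<dots> \<le> v l" using sval_le_value[OF l] cutoff_greatest by auto
  finally show "cumB cutoff \<le> v l" .
  show "sval (cutoff + 1) \<le> v l"
  proof (cases "cutoff + 1 \<le> n")
    case True
    then show ?thesis using sval_le_value[OF l(1)] l by auto
  qed (use l values_pos in \<open>auto simp: upa_sval_def intro: less_imp_le\<close>)
qed

lemma next_agent: assumes "cutoff < n"
  obtains g where "g < n" "g \<notin> winners" "sval (cutoff + 1) = v g" "v g < cumB cutoff + B g"
    "sum B (insert g winners) = cumB cutoff + B g"
proof -
  define g where "g = upa_agent n v (cutoff + 1)"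
  have g: "g < n" "rank g = cutoff + 1" using agent_of_rank assms g_def by auto
  have out: "g \<notin> winners" using g by auto
  have "ranked_upto (cutoff + 1) = insert g winners"
  proof (intro set_eqI iffI)
    fix l assume "l \<in> ranked_upto (cutoff + 1)"
    then show "l \<in> insert g winners" using rank_inject[OF _ g(1), of l] g(2) by (auto simp: le_Suc_eq)
  qed (use g in auto)
  then have cum_next: "cumB (cutoff + 1) = sum B (insert g winners)" by (simp add: cumB_eq)
  have sum_eq: "sum B (insert g winners) = cumB cutoff + B g"
    using out by (simp add: cumB_eq add.commute)
  have "\<not> admissible (cutoff + 1)" using cutoff_greatest(3)[of "cutoff + 1"] assms by auto
  then show ?thesis using that[OF g(1) out _ _ sum_eq] sval_rank[OF g(1)] g(2) cum_next sum_eq by auto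
qed

lemma price_le_threshold:
  assumes "M \<subseteq> {..<n}" "sum B M \<le> t" "\<forall>j<n. j \<notin> M \<longrightarrow> v j \<le> t"
  shows "price \<le> t"
proof (cases "winners \<subseteq> M")
  case True
  have "cumB cutoff \<le> t" using sum_budgets_mono[OF True assms(1)] assms(2) by (simp add: cumB_eq)
  moreover have "sval (cutoff + 1) \<le> t"
  proof (cases "cutoff < n")
    case True
    then obtain g where g: "g < n" "g \<notin> winners" "sval (cutoff + 1) = v g"
      "v g < cumB cutoff + B g" "sum B (insert g winners) = cumB cutoff + B g"
      by (rule next_agent)
    show ?thesis
    proof (cases "g \<in> M")
      case True
      then have "sum B (insert g winners) \<le> sum B M"
        using \<open>winners \<subseteq> M\<close> assms(1) by (intro sum_budgets_mono) auto
      then show ?thesis using g assms(2) by linarith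
    qed (use g assms(3) in auto)
  next
    case False
    then have "sval (cutoff + 1) = 0" using cutoff_greatest(1) by (simp add: upa_sval_def)
    then show ?thesis using sum_budgets_nonneg[OF assms(1)] assms(2) by linarith
  qed
  ultimately show ?thesis by simp
next
  case False
  then obtain j where "j \<in> winners" "j \<notin> M" by auto
  then show ?thesis using winner_bounds_price[of j] assms(3) by fastforce
qed

lemma loser_value_le_price: assumes "j < n" "cutoff < rank j" shows "v j \<le> price"
  using value_le_sval[OF assms(1), of "cutoff + 1"] assms by auto

lemma price_pos: assumes "i \<in> winners" shows "0 < price"
  using winner_bounds_price(1) assms budgets_pos
    sum_budgets_mono[of "{i}" winners] by (fastforce simp: cumB_eq)

subsection \<open>The allocation\<close>

lemma alloc_winner: assumes "i < n" "rank i \<le> cutoff" shows "upa_alloc n v B i = B i / price"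
  using assms unfolding upa_alloc_def Let_def by (auto simp: max_def)

lemma alloc_loser: assumes "i < n" "cutoff < rank i"
  shows "upa_alloc n v B i = max 0 (1 - sum B (ahead i) / v i)"
proof -
  have vi: "0 < v i" using values_pos assms by auto
  show ?thesis
  proof (cases "rank i = cutoff + 1")
    case True
    then have "sval (cutoff + 1) = v i" "cumB cutoff = sum B (ahead i)"
      using sval_rank[OF assms(1)] cumB_rank(1)[OF assms(1)] by auto
    moreover have "(\<Sum>j\<in>winners. B j / v i) = cumB cutoff / v i"
      by (simp add: cumB_eq sum_divide_distrib)
    ultimately show ?thesis using True assms vi unfolding upa_alloc_def Let_def by auto
  next
    case False
    then have k: "cutoff < rank i - 1" "rank i - 1 \<le> n" using assms rank_bounds[OF assms(1)] by auto
    then have "sval (rank i - 1) < cumB (rank i - 1)" using cutoff_greatest(3)[of "rank i - 1"] by linarith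
    moreover have "v i \<le> sval (rank i - 1)" using value_le_sval[OF assms(1)] k by auto
    ultimately have "1 < sum B (ahead i) / v i" using cumB_rank(1)[OF assms(1)] vi by simp
    then show ?thesis using False assms unfolding upa_alloc_def Let_def by auto
  qed
qed

lemma alloc_loser_le: assumes "i < n" "cutoff < rank i"
  shows "upa_alloc n v B i \<le> B i / (sum B (ahead i) + B i)"
proof -
  let ?S = "sum B (ahead i)"
  have S: "0 \<le> ?S" by (rule sum_budgets_nonneg) auto
  have "v i < ?S + B i" "0 < v i" "0 < B i"
    using winner_iff[OF assms(1)] assms values_pos budgets_pos by auto
  then have "1 - ?S / v i \<le> 1 - ?S / (?S + B i)" using S by (intro diff_left_mono frac_le) auto
  also have "\<dots> = B i / (?S + B i)" using \<open>0 < B i\<close> S by (simp add: field_simps)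
  finally show ?thesis using alloc_loser[OF assms] \<open>0 < B i\<close> S by simp
qed

end

subsection \<open>Raising one agent's value\<close>

locale upa_raise =
  fixes n :: nat and v B :: "nat \<Rightarrow> real" and i :: nat and a b :: real
  assumes agent: "i < n" and values_pos: "\<forall>j<n. 0 < v j" and budgets_pos: "\<forall>j<n. 0 < B j"
    and raise: "0 < a" "a \<le> b"
begin

sublocale lo: upa_profile n "v(i := a)" B
  using values_pos budgets_pos raise by unfold_locales auto

sublocale hi: upa_profile n "v(i := b)" B
  using values_pos budgets_pos raise by unfold_locales auto

lemma budget_pos: "0 < B i"
  using agent budgets_pos by simp

lemma budget_ahead_mono: "sum B (hi.ahead i) \<le> sum B (lo.ahead i)"
  using raise by (intro hi.sum_budgets_mono) auto

lemma alloc_mono_winner: assumes "lo.rank i \<le> lo.cutoff"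
  shows "upa_alloc n (v(i := a)) B i \<le> upa_alloc n (v(i := b)) B i"
proof -
  have hi_winner: "hi.rank i \<le> hi.cutoff"
    using lo.winner_iff[OF agent] hi.winner_iff[OF agent] budget_ahead_mono raise assms by simp
  have "hi.price \<le> lo.price"
  proof (rule hi.price_le_threshold[of lo.winners])
    show "\<forall>j<n. j \<notin> lo.winners \<longrightarrow> (v(i := b)) j \<le> lo.price"
      using lo.loser_value_le_price assms agent by (metis (mono_tags) fun_upd_other mem_Collect_eq not_le)
  qed (auto simp: lo.cumB_eq)
  then have "B i / lo.price \<le> B i / hi.price"
    using lo.price_pos hi.price_pos assms hi_winner agent budget_pos
    by (intro divide_left_mono mult_pos_pos) auto
  then show ?thesis using lo.alloc_winner[OF agent assms] hi.alloc_winner[OF agent hi_winner] by simp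
qed

lemma alloc_mono_loser: assumes "lo.cutoff < lo.rank i"
  shows "upa_alloc n (v(i := a)) B i \<le> upa_alloc n (v(i := b)) B i"
proof -
  let ?S = "sum B (lo.ahead i)"
  have S_nonneg: "0 \<le> ?S" by (rule lo.sum_budgets_nonneg) auto
  show ?thesis
  proof (cases "hi.rank i \<le> hi.cutoff")
    case hi_winner: True
    have "a < ?S + B i" using lo.winner_iff[OF agent] assms by simp
    then have "hi.price \<le> ?S + B i"
      using agent by (intro hi.price_le_threshold[of "insert i (lo.ahead i)"]) auto
    then have "B i / (?S + B i) \<le> B i / hi.price"
      using hi.price_pos hi_winner agent budget_pos S_nonneg by (intro divide_left_mono mult_pos_pos) auto
    then show ?thesis using lo.alloc_loser_le[OF agent assms] hi.alloc_winner[OF agent hi_winner] by simp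
  next
    case False
    have "sum B (hi.ahead i) / b \<le> ?S / a"
      using raise by (intro frac_le[OF S_nonneg budget_ahead_mono])
    then show ?thesis using lo.alloc_loser[OF agent assms] hi.alloc_loser[OF agent] False by simp
  qed
qed

end

theorem mainTheorem6:
  fixes n i :: nat and v B :: "nat \<Rightarrow> real" and a b :: real
  assumes "i < n"
    and "\<forall>j<n. v j > 0"
    and "\<forall>j<n. B j > 0"
    and "0 < a" and "a \<le> b"
  shows "upa_alloc n (v(i := a)) B i \<le> upa_alloc n (v(i := b)) B i"
proof -
  interpret upa_raise n v B i a b using assms by unfold_locales auto
  show ?thesis using alloc_mono_winner alloc_mono_loser by (cases "lo.rank i \<le> lo.cutoff") auto
qed

end
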